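(* Let $n\ge 3$ and let $B$ be a set of points in $PG(n,q)$ whose span $\langle B\rangle$ has dimension at least $3$. Suppose that every point $R\notin B$ lying on at least one secant line to $B$ lies on no tangent line to $B$. Then $|B|\geq 3q$.
   Context: A secant line to $B$ is a line meeting $B$ in at least two points. A tangent line to $B$ is a line meeting $B$ in exactly one point. *)

theory Defs
  imports "HOL-Analysis.Analysis"
begin

text \<open>Projective space PG(n,q) modelled as the lattice of subspaces of the vector
space 'k^'m over a finite field 'k (q = CARD('k)), with CARD('m) = n+1.
Points are 1-dimensional subspaces, lines are 2-dimensional subspaces,
incidence is inclusion.\<close>

definition pg_points :: "('k::field ^ 'm) set set" where
  "pg_points = {P. vec.subspace P \<and> vec.dim P = 1}"

definition pg_lines :: "('k::field ^ 'm) set set" where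
  "pg_lines = {L. vec.subspace L \<and> vec.dim L = 2}"

definition proj_span_dim :: "('k::field ^ 'm) set set \<Rightarrow> int" where
  "proj_span_dim S = int (vec.dim (vec.span (\<Union> S))) - 1"

definition secant_line :: "('k::field ^ 'm) set set \<Rightarrow> ('k ^ 'm) set \<Rightarrow> bool" where
  "secant_line B L \<longleftrightarrow> L \<in> pg_lines \<and> card {P \<in> B. P \<subseteq> L} \<ge> 2"

definition tangent_line :: "('k::field ^ 'm) set set \<Rightarrow> ('k ^ 'm) set \<Rightarrow> bool" where
  "tangent_line B L \<longleftrightarrow> L \<in> pg_lines \<and> card {P \<in> B. P \<subseteq> L} = 1"

end

theory Submission
  imports Defs
begin

text \<open>
  Choose points \<open>X = \<langle>x\<rangle>, Y = \<langle>y\<rangle>, Z = \<langle>z\<rangle>\<close> of \<open>B\<close> spanning a plane \<open>\<pi>\<close> and a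
  point \<open>V \<in> B\<close> off \<open>\<pi>\<close>.  Every point \<open>R \<notin> B\<close> of \<open>\<pi>\<close> lies on a secant: the line \<open>XR\<close>
  meets the secant \<open>YZ\<close> in a point, which is either in \<open>B\<close> or forces a second point of
  \<open>B\<close> on \<open>XR\<close>.  Consequently the line \<open>RV\<close> is no tangent, so it contains a point
  \<open>g(R) \<in> B\<close> other than \<open>V\<close>; and \<open>g\<close> maps the points of \<open>\<pi>\<close> outside \<open>B\<close> injectively to
  points of \<open>B\<close> outside \<open>\<pi> \<union> {V}\<close>, because a line not contained in \<open>\<pi>\<close> meets \<open>\<pi>\<close> at
  most once.  Hence \<open>|B| > |\<pi>| \<ge> q\<^sup>2 + 1\<close>, and \<open>q\<^sup>2 + 2 \<ge> 3q\<close> for every natural \<open>q\<close>.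
\<close>

lemma pg_point_of_vector: "(v::'k::field^'m) \<noteq> 0 \<Longrightarrow> vec.span {v} \<in> pg_points"
  unfolding pg_points_def by simp

lemma pg_pointE:
  assumes "P \<in> pg_points"
  obtains v :: "'k::field^'m" where "v \<noteq> 0" "P = vec.span {v}"
proof -
  have P: "vec.subspace P" "vec.dim P = 1" using assms by (auto simp: pg_points_def)
  obtain C where C: "C \<subseteq> P" "vec.independent C" "P \<subseteq> vec.span C" "card C = vec.dim P"
    using vec.basis_exists[of P] by metis
  then obtain v where v: "C = {v}" using P by (metis card_1_singletonE)
  have "v \<noteq> 0" using C(2) v vec.dependent_zero by blast
  moreover have "P = vec.span {v}" using C v P(1) vec.span_subspace by metis
  ultimately show thesis using that by blast
qed

lemma point_subset_subspace:
  "vec.subspace S \<Longrightarrow> vec.span {v} \<subseteq> S \<longleftrightarrow> (v::'k::field^'m) \<in> S"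
  using vec.span_minimal vec.span_base by blast

lemma pg_point_subset_eq:
  assumes "P \<in> pg_points" "Q \<in> pg_points" "P \<subseteq> Q"
  shows "P = Q"
  using vec.subspace_dim_equal[of P Q] assms unfolding pg_points_def by auto

definition pg_join :: "('k::field ^ 'm) set \<Rightarrow> ('k ^ 'm) set \<Rightarrow> ('k ^ 'm) set" where
  "pg_join P Q = vec.span (P \<union> Q)"

lemma pg_join_vectors: "pg_join (vec.span {u}) (vec.span {v}) = vec.span {u, v :: 'k::field^'m}"
  unfolding pg_join_def vec.span_eq
  by (auto intro: vec.span_base vec.span_mono[THEN subsetD, rotated])

lemma pg_join_line:
  fixes P Q :: "('k::field ^ 'm) set"
  assumes "P \<in> pg_points" "Q \<in> pg_points" "P \<noteq> Q"
  shows "pg_join P Q \<in> pg_lines"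
proof -
  obtain u where u: "u \<noteq> 0" "P = vec.span {u}" using pg_pointE assms(1) by blast
  obtain v where v: "v \<noteq> 0" "Q = vec.span {v}" using pg_pointE assms(2) by blast
  have "v \<notin> vec.span {u}"
  proof
    assume "v \<in> vec.span {u}"
    then have "Q \<subseteq> P" using u v by (simp add: point_subset_subspace)
    with pg_point_subset_eq[OF assms(2,1)] assms(3) show False by simp
  qed
  then have "vec.independent {v, u}" "v \<noteq> u"
    using u(1) vec.span_base by (auto simp: vec.independent_insert)
  then show ?thesis
    unfolding u(2) v(2) pg_join_vectors pg_lines_def
    by (simp add: vec.dim_eq_card_independent insert_commute)
qed

lemma pg_join_subset: "vec.subspace S \<Longrightarrow> P \<subseteq> S \<Longrightarrow> Q \<subseteq> S \<Longrightarrow> pg_join P Q \<subseteq> S"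
  unfolding pg_join_def by (simp add: vec.span_minimal)

lemma pg_line_eq_join:
  assumes "L \<in> pg_lines" "P \<in> pg_points" "Q \<in> pg_points" "P \<noteq> Q" "P \<subseteq> L" "Q \<subseteq> L"
  shows "L = pg_join P Q"
proof -
  have "pg_join P Q \<in> pg_lines" using pg_join_line assms(2-4) by blast
  moreover have "pg_join P Q \<subseteq> L"
    using assms(1,5,6) by (intro pg_join_subset) (auto simp: pg_lines_def)
  ultimately show ?thesis
    using vec.subspace_dim_equal[of "pg_join P Q" L] assms(1) by (auto simp: pg_lines_def)
qed

lemma line_meets_subspace_once:
  assumes "L \<in> pg_lines" "vec.subspace S" "\<not> L \<subseteq> S"
    and "P \<in> pg_points" "Q \<in> pg_points" "P \<subseteq> L" "Q \<subseteq> L" "P \<subseteq> S" "Q \<subseteq> S"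
  shows "P = Q"
  using assms pg_line_eq_join[of L P Q] pg_join_subset[of S P Q] by blast

text \<open>Linear independence of three vectors, in the explicit form used for coordinate computations.\<close>

definition lin_indep3 :: "'k::field^'m \<Rightarrow> 'k^'m \<Rightarrow> 'k^'m \<Rightarrow> bool" where
  "lin_indep3 x y z \<longleftrightarrow> (\<forall>a b c. a *s x + b *s y + c *s z = 0 \<longrightarrow> a = 0 \<and> b = 0 \<and> c = 0)"

lemma lin_indep3I:
  fixes x y z :: "'k::field^'m"
  assumes x: "x \<noteq> 0" and y: "y \<notin> vec.span {x}" and z: "z \<notin> vec.span {x, y}"
  shows "lin_indep3 x y z"
  unfolding lin_indep3_def
proof (intro allI impI)
  fix a b c assume rel: "a *s x + b *s y + c *s z = 0"
  have c: "c = 0"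
  proof (rule ccontr)
    assume "c \<noteq> 0"
    have "c *s z = - (a *s x + b *s y)"
      using rel by (metis add.commute eq_neg_iff_add_eq_0)
    also have "\<dots> \<in> vec.span {x, y}"
      by (intro vec.span_neg vec.span_add vec.span_scale vec.span_base) auto
    finally have "c *s z \<in> vec.span {x, y}" .
    then have "inverse c *s (c *s z) \<in> vec.span {x, y}" by (rule vec.span_scale)
    then show False using z \<open>c \<noteq> 0\<close> by simp
  qed
  have b: "b = 0"
  proof (rule ccontr)
    assume "b \<noteq> 0"
    have "b *s y = - (a *s x)"
      using rel c by (metis add.commute add.right_neutral eq_neg_iff_add_eq_0 vec.scale_zero_left)
    also have "\<dots> \<in> vec.span {x}" by (intro vec.span_neg vec.span_scale vec.span_base) auto
    finally have "b *s y \<in> vec.span {x}" .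
    then have "inverse b *s (b *s y) \<in> vec.span {x}" by (rule vec.span_scale)
    then show False using y \<open>b \<noteq> 0\<close> by simp
  qed
  have "a = 0" using rel b c x by simp
  with b c show "a = 0 \<and> b = 0 \<and> c = 0" by simp
qed

lemma lin_indep3_nonzero:
  assumes "lin_indep3 x y z"
  shows "x \<noteq> 0" "y \<noteq> 0" "z \<noteq> 0"
proof -
  have "1 *s x + 0 *s y + 0 *s z \<noteq> 0" "0 *s x + 1 *s y + 0 *s z \<noteq> 0" "0 *s x + 0 *s y + 1 *s z \<noteq> 0"
    using assms unfolding lin_indep3_def by (metis one_neq_zero)+
  then show "x \<noteq> 0" "y \<noteq> 0" "z \<noteq> 0" by auto
qed

lemma lin_indep3_distinct:
  assumes "lin_indep3 x y z"
  shows "vec.span {y} \<noteq> vec.span {z}"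
proof
  assume "vec.span {y} = vec.span {z}"
  then have "y \<in> vec.span {z}" by (metis singletonI vec.span_base)
  then obtain k where "y = k *s z" by (auto simp: vec.span_singleton)
  then have "0 *s x + 1 *s y + (- k) *s z = 0" by simp
  then show False using assms unfolding lin_indep3_def by (metis one_neq_zero)
qed

lemma point_outside_span:
  assumes "int (card F) \<le> proj_span_dim B" "finite F"
  obtains P where "P \<in> B" "\<not> P \<subseteq> vec.span F"
proof -
  have "\<exists>P\<in>B. \<not> P \<subseteq> vec.span F"
  proof (rule ccontr)
    assume "\<not> ?thesis"
    then have "vec.span (\<Union>B) \<subseteq> vec.span F" by (simp add: Union_least vec.span_minimal)
    then have "vec.dim (vec.span (\<Union>B)) \<le> card F" using vec.dim_le_card assms(2) by blast
    then show False using assms(1) unfolding proj_span_dim_def by linarith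
  qed
  then show thesis using that by blast
qed

lemma frame_in_B:
  fixes B :: "('k::field ^ 'm) set set"
  assumes "B \<subseteq> pg_points" "proj_span_dim B \<ge> 3"
  obtains x y z w :: "'k^'m" where
    "vec.span {x} \<in> B" "vec.span {y} \<in> B" "vec.span {z} \<in> B" "vec.span {w} \<in> B"
    "lin_indep3 x y z" "w \<notin> vec.span {x, y, z}"
proof -
  have escape: "\<exists>v. vec.span {v} \<in> B \<and> v \<notin> vec.span F"
    if F: "finite F" "card F \<le> 3" for F
  proof -
    have "int (card F) \<le> proj_span_dim B" using F(2) assms(2) by linarith
    then obtain P where P: "P \<in> B" "\<not> P \<subseteq> vec.span F"
      using point_outside_span F(1) by blast
    obtain v where "P = vec.span {v}" using pg_pointE P(1) assms(1) by blast
    then show ?thesis using P point_subset_subspace[of "vec.span F" v] by auto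
  qed
  have card3: "card {x, y, z} \<le> 3" for x y z :: "'k^'m"
    using card_length[of "[x, y, z]"] by simp
  obtain x where x: "vec.span {x} \<in> B" "x \<notin> vec.span {}" using escape[of "{}"] by auto
  obtain y where y: "vec.span {y} \<in> B" "y \<notin> vec.span {x}" using escape[of "{x}"] by auto
  obtain z where z: "vec.span {z} \<in> B" "z \<notin> vec.span {x, y}"
    using escape[of "{x, y}"] card3[of x x y] by auto
  obtain w where w: "vec.span {w} \<in> B" "w \<notin> vec.span {x, y, z}"
    using escape[of "{x, y, z}"] card3[of x y z] by auto
  have "lin_indep3 x y z" using x(2) y(2) z(2) by (intro lin_indep3I) auto
  then show thesis using that x(1) y(1) z(1) w by blast
qed

definition no_tangent_at_secant_points :: "('k::field ^ 'm) set set \<Rightarrow> bool" where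
  "no_tangent_at_secant_points B \<longleftrightarrow>
     (\<forall>R \<in> pg_points - B.
        (\<exists>L. secant_line B L \<and> R \<subseteq> L) \<longrightarrow> \<not> (\<exists>L. tangent_line B L \<and> R \<subseteq> L))"

lemma secant_lineI:
  fixes B :: "('k::{field,finite} ^ 'm) set set"
  assumes "L \<in> pg_lines" "P \<in> B" "Q \<in> B" "P \<noteq> Q" "P \<subseteq> L" "Q \<subseteq> L"
  shows "secant_line B L"
proof -
  have "card {P, Q} \<le> card {S \<in> B. S \<subseteq> L}" using assms(2-6) by (intro card_mono) auto
  then show ?thesis using assms(1,4) by (simp add: secant_line_def)
qed

lemma second_point_on_line:
  fixes B :: "('k::{field,finite} ^ 'm) set set"
  assumes H: "no_tangent_at_secant_points B"
    and R: "R \<in> pg_points" "R \<notin> B" "secant_line B L" "R \<subseteq> L"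
    and L': "L' \<in> pg_lines" "R \<subseteq> L'" and P: "P \<in> B" "P \<subseteq> L'"
  shows "\<exists>Q\<in>B. Q \<subseteq> L' \<and> Q \<noteq> P"
proof (rule ccontr)
  assume "\<not> ?thesis"
  then have "{Q \<in> B. Q \<subseteq> L'} = {P}" using P by blast
  then have "tangent_line B L'" using L'(1) by (simp add: tangent_line_def)
  then show False using H R L'(2) unfolding no_tangent_at_secant_points_def by blast
qed

text \<open>In the plane \<open>\<langle>x, y, z\<rangle>\<close>, the line joining \<open>X = \<langle>x\<rangle>\<close> to another point \<open>R\<close> meets the
  line \<open>\<langle>y, z\<rangle>\<close>: writing \<open>R = \<langle>a x + w\<rangle>\<close> with \<open>w \<in> \<langle>y, z\<rangle>\<close>, the point \<open>\<langle>w\<rangle>\<close> is on both.\<close>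

lemma line_meets_opposite_side:
  fixes x y z :: "'k::field^'m"
  assumes R: "R \<in> pg_points" "R \<subseteq> vec.span {x, y, z}" "R \<noteq> vec.span {x}" and x: "x \<noteq> 0"
  obtains w where "w \<noteq> 0" "w \<in> vec.span {y, z}" "vec.span {w} \<noteq> vec.span {x}"
    "R \<subseteq> pg_join (vec.span {x}) (vec.span {w})"
proof -
  obtain r where r: "R = vec.span {r}" using pg_pointE R(1) by blast
  have "r \<in> vec.span {x, y, z}" using R(2) r point_subset_subspace by blast
  then obtain a where w_yz: "r - a *s x \<in> vec.span {y, z}" by (auto simp: vec.span_breakdown_eq)
  define w where "w = r - a *s x"
  have r_eq: "r = a *s x + w" unfolding w_def by simp
  have w_x: "w \<notin> vec.span {x}"
  proof
    assume "w \<in> vec.span {x}"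
    then have "r \<in> vec.span {x}" unfolding r_eq by (simp add: vec.span_add vec.span_scale vec.span_base)
    then have "R = vec.span {x}"
      using pg_point_subset_eq[OF R(1) pg_point_of_vector[OF x]] r point_subset_subspace by blast
    then show False using R(3) by simp
  qed
  have "r \<in> vec.span {x, w}" unfolding r_eq by (simp add: vec.span_add vec.span_scale vec.span_base)
  then have R_join: "R \<subseteq> pg_join (vec.span {x}) (vec.span {w})"
    unfolding r pg_join_vectors by (simp add: point_subset_subspace)
  have "w \<noteq> 0" using w_x vec.span_zero by blast
  moreover have "vec.span {w} \<noteq> vec.span {x}" using w_x vec.span_base[of w "{w}"] by auto
  ultimately show thesis using that w_yz R_join unfolding w_def by blast
qed

text \<open>The line \<open>XR\<close> meets the secant \<open>YZ\<close> in a point \<open>W \<noteq> X\<close>; if \<open>W \<in> B\<close> then \<open>XR\<close> is a secant,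
  otherwise \<open>W\<close> is a secant point and the line \<open>XW = XR\<close> must contain a second point of \<open>B\<close>.\<close>

lemma plane_points_on_secants:
  fixes B :: "('k::{field,finite} ^ 'm) set set"
  assumes H: "no_tangent_at_secant_points B"
    and frame: "vec.span {x} \<in> B" "vec.span {y} \<in> B" "vec.span {z} \<in> B" "lin_indep3 x y z"
    and R: "R \<in> pg_points" "R \<notin> B" "R \<subseteq> vec.span {x, y, z}"
  shows "\<exists>L. secant_line B L \<and> R \<subseteq> L"
proof -
  define X Y Z where "X = vec.span {x}" and "Y = vec.span {y}" and "Z = vec.span {z}"
  have XYZ: "X \<in> pg_points" "Y \<in> pg_points" "Z \<in> pg_points"
    unfolding X_def Y_def Z_def using lin_indep3_nonzero[OF frame(4)] by (auto intro: pg_point_of_vector)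
  have "R \<noteq> X" using R(2) frame(1) X_def by auto
  then obtain w where w: "w \<noteq> 0" "w \<in> vec.span {y, z}" "vec.span {w} \<noteq> X"
    "R \<subseteq> pg_join X (vec.span {w})"
    using line_meets_opposite_side[OF R(1,3)] lin_indep3_nonzero(1)[OF frame(4)] X_def by metis
  define W where "W = vec.span {w}"
  have W: "W \<in> pg_points" unfolding W_def using w(1) by (rule pg_point_of_vector)
  define L where "L = pg_join X W"
  have L: "L \<in> pg_lines" unfolding L_def using pg_join_line W XYZ(1) w(3) W_def by blast
  have XL: "X \<subseteq> L" and WL: "W \<subseteq> L" unfolding L_def pg_join_def by (auto intro: vec.span_base)
  have "\<exists>Q\<in>B. Q \<subseteq> L \<and> Q \<noteq> X"
  proof (cases "W \<in> B")
    case True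
    then show ?thesis using WL w(3) W_def by blast
  next
    case False
    define N where "N = pg_join Y Z"
    have "Y \<noteq> Z" using lin_indep3_distinct[OF frame(4)] Y_def Z_def by simp
    then have N: "N \<in> pg_lines" unfolding N_def using pg_join_line XYZ(2,3) by blast
    have "secant_line B N" using secant_lineI[OF N] frame(2,3) \<open>Y \<noteq> Z\<close>
      unfolding N_def Y_def Z_def pg_join_def by (auto intro: vec.span_base)
    moreover have "W \<subseteq> N" using w(2) N unfolding N_def Y_def Z_def W_def pg_join_vectors
      by (simp add: point_subset_subspace)
    ultimately show ?thesis
      using second_point_on_line[OF H W False _ _ L WL] frame(1) XL X_def by blast
  qed
  moreover have "R \<subseteq> L" using w(4) unfolding L_def W_def .
  ultimately show ?thesis using secant_lineI[OF L] frame(1) XL X_def by blast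
qed

text \<open>A projective plane over a field with \<open>q\<close> elements has at least \<open>q\<^sup>2 + 1\<close> points: the
  points \<open>\<langle>x + a y + b z\<rangle>\<close> are pairwise distinct and differ from \<open>\<langle>z\<rangle>\<close>.\<close>

lemma card_plane_points:
  fixes x y z :: "'k::{field,finite}^'m"
  assumes indep: "lin_indep3 x y z"
  shows "CARD('k) * CARD('k) + 1 \<le> card {P \<in> pg_points. P \<subseteq> vec.span {x, y, z}}"
proof -
  define plane_pts where "plane_pts = {P \<in> pg_points. P \<subseteq> vec.span {x, y, z}}"
  define h where "h = (\<lambda>(a, b). vec.span {x + a *s y + b *s z})"
  have coeffs_zero: "a = 0 \<and> b = 0 \<and> c = 0" if "a *s x + b *s y + c *s z = 0" for a b c
    using indep that unfolding lin_indep3_def by blast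
  have h_plane_pts: "h (a, b) \<in> plane_pts - {vec.span {z}}" for a b
  proof -
    have "x + a *s y + b *s z \<noteq> 0" using coeffs_zero[of 1 a b] by auto
    moreover have "x + a *s y + b *s z \<in> vec.span {x, y, z}"
      by (intro vec.span_add vec.span_scale vec.span_base) auto
    moreover have "x + a *s y + b *s z \<notin> vec.span {z}"
    proof
      assume "x + a *s y + b *s z \<in> vec.span {z}"
      then obtain k where "x + a *s y + b *s z = k *s z" by (auto simp: vec.span_singleton)
      then have "1 *s x + a *s y + (b - k) *s z = 0" by (simp add: vec_eq_iff algebra_simps)
      then show False using coeffs_zero by (metis one_neq_zero)
    qed
    ultimately show ?thesis unfolding plane_pts_def h_def
      using vec.span_base[of "x + a *s y + b *s z" "{x + a *s y + b *s z}"]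
      by (auto simp: point_subset_subspace pg_point_of_vector)
  qed
  have "inj h"
  proof (rule injI)
    fix ab ab' assume eq: "h ab = h ab'"
    obtain a b a' b' where ab: "ab = (a, b)" "ab' = (a', b')" by fastforce
    have "x + a *s y + b *s z \<in> vec.span {x + a' *s y + b' *s z}"
      using eq vec.span_base[of "x + a *s y + b *s z"] unfolding h_def ab by auto
    then obtain k where "x + a *s y + b *s z = k *s (x + a' *s y + b' *s z)"
      by (auto simp: vec.span_singleton)
    then have "(1 - k) *s x + (a - k * a') *s y + (b - k * b') *s z = 0"
      by (simp add: vec_eq_iff algebra_simps)
    then show "ab = ab'" using coeffs_zero unfolding ab by fastforce
  qed
  have z_plane_pts: "vec.span {z} \<in> plane_pts"
    unfolding plane_pts_def using lin_indep3_nonzero[OF indep]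
    by (auto simp: pg_point_of_vector vec.span_mono)
  have "CARD('k) * CARD('k) = card (range h)"
    using \<open>inj h\<close>
    by (simp add: card_image UNIV_Times_UNIV[symmetric] card_cartesian_product del: UNIV_Times_UNIV)
  also have "\<dots> \<le> card (plane_pts - {vec.span {z}})" using h_plane_pts by (intro card_mono) auto
  also have "\<dots> = card plane_pts - 1" using z_plane_pts by simp
  finally have "CARD('k) * CARD('k) \<le> card plane_pts - 1" .
  moreover have "card plane_pts > 0" using z_plane_pts by (auto simp: card_gt_0_iff)
  ultimately show ?thesis unfolding plane_pts_def by linarith
qed

lemma card_less_by_injection:
  assumes "finite A" "finite B" "inj_on g (A - B)" "g ` (A - B) \<subseteq> B - A - {y}" "y \<in> B - A"
  shows "card A < card B"
proof -
  have "card (A - B) \<le> card (B - A - {y})" using assms(2-4) by (intro card_inj_on_le) auto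
  also have "\<dots> < card (B - A)" using assms(2,5) by (intro card_Diff1_less) auto
  finally have "card (A - B) < card (B - A)" .
  moreover have "card B = card (A \<inter> B) + card (B - A)" "card A = card (A \<inter> B) + card (A - B)"
    using card_Int_Diff[of B A] card_Int_Diff[of A B] assms(1,2) by (simp_all add: Int_commute)
  ultimately show ?thesis by linarith
qed

text \<open>If every point of a subspace \<open>S\<close> outside \<open>B\<close> lies on a secant and \<open>B\<close> has a point \<open>Y\<close>
  off \<open>S\<close>, then \<open>B\<close> has more elements than \<open>S\<close> has points: projecting from \<open>Y\<close> maps the
  points of \<open>S\<close> outside \<open>B\<close> injectively into \<open>B - S - {Y}\<close>.\<close>

lemma card_B_exceeds_subspace_points:
  fixes B :: "('k::{field,finite} ^ 'm) set set"
  assumes H: "no_tangent_at_secant_points B" and B: "B \<subseteq> pg_points"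
    and S: "vec.subspace S"
    and Y: "Y \<in> B" "\<not> Y \<subseteq> S"
    and sec: "\<And>R. R \<in> pg_points \<Longrightarrow> R \<notin> B \<Longrightarrow> R \<subseteq> S \<Longrightarrow> \<exists>L. secant_line B L \<and> R \<subseteq> L"
  shows "card {P \<in> pg_points. P \<subseteq> S} < card B"
proof -
  define PS where "PS = {P \<in> pg_points. P \<subseteq> S}"
  define g where "g = (\<lambda>R. SOME Q. Q \<in> B \<and> Q \<subseteq> pg_join R Y \<and> Q \<noteq> Y)"
  have Y_pt: "Y \<in> pg_points" using B Y(1) by blast
  have join: "pg_join R Y \<in> pg_lines" "R \<subseteq> pg_join R Y" "Y \<subseteq> pg_join R Y"
    "\<not> pg_join R Y \<subseteq> S" if R: "R \<in> PS" for R
  proof -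
    have "R \<in> pg_points" "R \<noteq> Y" using R Y(2) unfolding PS_def by auto
    then show "pg_join R Y \<in> pg_lines" using pg_join_line Y_pt by blast
    show "R \<subseteq> pg_join R Y" "Y \<subseteq> pg_join R Y" unfolding pg_join_def by (auto intro: vec.span_base)
    then show "\<not> pg_join R Y \<subseteq> S" using Y(2) by blast
  qed
  have g: "g R \<in> B" "g R \<in> pg_points" "g R \<subseteq> pg_join R Y" "g R \<noteq> Y" if R: "R \<in> PS - B" for R
  proof -
    have R_PS: "R \<in> PS" and R': "R \<in> pg_points" "R \<notin> B" "R \<subseteq> S" using R unfolding PS_def by auto
    obtain L where L: "secant_line B L" "R \<subseteq> L" using sec[OF R'] by blast
    have "\<exists>Q\<in>B. Q \<subseteq> pg_join R Y \<and> Q \<noteq> Y"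
      by (rule second_point_on_line[OF H R'(1,2) L join(1,2)[OF R_PS] Y(1) join(3)[OF R_PS]])
    then have "\<exists>Q. Q \<in> B \<and> Q \<subseteq> pg_join R Y \<and> Q \<noteq> Y" by blast
    then have "g R \<in> B \<and> g R \<subseteq> pg_join R Y \<and> g R \<noteq> Y" unfolding g_def by (rule someI_ex)
    then show "g R \<in> B" "g R \<in> pg_points" "g R \<subseteq> pg_join R Y" "g R \<noteq> Y" using B by auto
  qed
  text \<open>\<open>g R\<close> lies off \<open>S\<close>, since the line \<open>RY\<close> meets \<open>S\<close> only in \<open>R \<notin> B\<close>.\<close>
  have g_off: "g R \<notin> PS" if R: "R \<in> PS - B" for R
  proof
    assume "g R \<in> PS"
    moreover have "R \<in> PS" using R by simp
    ultimately have "g R = R"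
      using line_meets_subspace_once[OF join(1) S join(4), of R "g R" R] g(2,3)[OF R] join(2)
      unfolding PS_def by blast
    then show False using g(1)[OF R] R by simp
  qed
  text \<open>\<open>R\<close> is recovered from \<open>g R\<close> as the intersection of the line through \<open>g R\<close> and \<open>Y\<close>
    with \<open>S\<close>.\<close>
  have "inj_on g (PS - B)"
  proof (rule inj_onI)
    fix R1 R2 assume R1: "R1 \<in> PS - B" and R2: "R2 \<in> PS - B" and eq: "g R1 = g R2"
    have line_eq: "pg_join R Y = pg_join (g R) Y" if R: "R \<in> PS - B" for R
      using pg_line_eq_join[OF join(1) g(2) Y_pt g(4) g(3) join(3)] R by blast
    have "R2 \<subseteq> pg_join R1 Y"
      using join(2)[of R2] R2 line_eq[OF R1] line_eq[OF R2] eq by simp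
    then show "R1 = R2"
      using line_meets_subspace_once[OF join(1) S join(4), of R1 R1 R2] join(2)[of R1] R1 R2
      unfolding PS_def by blast
  qed
  moreover have "g ` (PS - B) \<subseteq> B - PS - {Y}" using g g_off by blast
  moreover have "Y \<in> B - PS" using Y unfolding PS_def by auto
  ultimately show ?thesis unfolding PS_def[symmetric] by (intro card_less_by_injection) auto
qed

text \<open>The final arithmetic: \<open>(q - 1)(q - 2) \<ge> 0\<close> for every natural \<open>q\<close>.\<close>

lemma three_le_square_plus_two: "3 * q \<le> q * q + (2::nat)"
  by (induction q) auto

theorem mainTheorem15:
  fixes B :: "('k::{field,finite} ^ 'm) set set" and n :: nat
  assumes "CARD('m) = n + 1"
    and "n \<ge> 3"
    and "B \<subseteq> pg_points"
    and "proj_span_dim B \<ge> 3"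
    and "\<forall>R \<in> pg_points - B.
           (\<exists>L. secant_line B L \<and> R \<subseteq> L) \<longrightarrow> \<not> (\<exists>L. tangent_line B L \<and> R \<subseteq> L)"
  shows "card B \<ge> 3 * CARD('k)"
proof -
  have H: "no_tangent_at_secant_points B"
    using assms(5) unfolding no_tangent_at_secant_points_def .
  obtain x y z w :: "'k^'m" where frame:
    "vec.span {x} \<in> B" "vec.span {y} \<in> B" "vec.span {z} \<in> B" "vec.span {w} \<in> B"
    "lin_indep3 x y z" "w \<notin> vec.span {x, y, z}"
    using frame_in_B[OF assms(3,4)] by blast
  define plane where "plane = vec.span {x, y, z}"
  have "card {P \<in> pg_points. P \<subseteq> plane} < card B"
  proof (rule card_B_exceeds_subspace_points[OF H assms(3)])
    show "vec.subspace plane" unfolding plane_def by simp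
    show "\<not> vec.span {w} \<subseteq> plane"
      using frame(6) point_subset_subspace[of plane w] unfolding plane_def by simp
    show "\<exists>L. secant_line B L \<and> R \<subseteq> L"
      if "R \<in> pg_points" "R \<notin> B" "R \<subseteq> plane" for R
      by (rule plane_points_on_secants[OF H frame(1-3,5) that[unfolded plane_def]])
  qed (rule frame(4))
  moreover have "CARD('k) * CARD('k) + 1 \<le> card {P \<in> pg_points. P \<subseteq> plane}"
    unfolding plane_def by (rule card_plane_points[OF frame(5)])
  moreover have "3 * CARD('k) \<le> CARD('k) * CARD('k) + 2"
    using three_le_square_plus_two .
  ultimately show ?thesis by linarith
qed

end
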